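(* Let $X$ be a random variable taking values in a set $\mathcal{X}$, let $Y \in [0,1]$ be a target outcome and let $\hat{Y} \in [0,1]$ be an expert prediction, all jointly distributed. Let $\mathcal{F}$ be a class of functions $\mathcal{X} \to [0,1]$, let $\alpha \ge 0$, and let $S_1, \dots, S_K \subseteq \mathcal{X}$ ($K \ge 1$) be an $\alpha$-multicalibrated partition with respect to $\mathcal{F}$ and $Y$. Let the random variable $J(X) \in [K]$ be defined by $J(X) = k$ iff $X \in S_k$. Define $\gamma^*, \beta^* \in \mathbb{R}^K$ by $$\gamma^*, \beta^* \in \arg\min_{\gamma \in \mathbb{R}^K, \beta \in \mathbb{R}^K} \mathbb{E}\left[\left(Y - \gamma_{J(X)} - \beta_{J(X)} \hat{Y}\right)^2\right].$$ Then for every $f \in \mathcal{F}$ and every $k \in [K]$, $$\mathbb{E}_k\left[\left(Y - \gamma^*_k - \beta^*_k \hat{Y}\right)^2\right] + 4\,\mathrm{Cov}_k(Y, \hat{Y})^2 \le \mathbb{E}_k\left[(Y - f(X))^2\right] + 2\alpha.$$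
   Context: For a subset $S \subseteq \mathcal{X}$ (with $\mathbb{P}(X \in S) > 0$), $\mathbb{E}_S, \mathrm{Var}_S, \mathrm{Cov}_S$ denote expectation, variance and covariance conditional on the event $\{X \in S\}$; $\mathbb{E}_k, \mathrm{Var}_k, \mathrm{Cov}_k$ denote these conditional on $\{X \in S_k\}$. A set $S \subseteq \mathcal{X}$ is $\alpha$-indistinguishable with respect to a function class $\mathcal{F}$ and target $Y$ if $|\mathrm{Cov}(f(X), Y \mid X \in S)| \le \alpha$ for all $f \in \mathcal{F}$. Sets $S_1, \dots, S_K$ form an $\alpha$-multicalibrated partition with respect to $\mathcal{F}$ and $Y$ if they partition $\mathcal{X}$ and each $S_k$ is $\alpha$-indistinguishable with respect to $\mathcal{F}$ and $Y$. *)

theory Defs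
  imports "HOL-Probability.Probability"
begin

text \<open>Expectation conditional on the event X \<in> S (ratio definition; the paper only
uses it when P(X \<in> S) > 0).\<close>
definition cond_exp_on :: "'a measure \<Rightarrow> ('a \<Rightarrow> 'x) \<Rightarrow> 'x set \<Rightarrow> ('a \<Rightarrow> real) \<Rightarrow> real" where
  "cond_exp_on M X S Z =
     (\<integral>\<omega>. indicator S (X \<omega>) * Z \<omega> \<partial>M) / measure M {\<omega> \<in> space M. X \<omega> \<in> S}"

definition cond_cov_on :: "'a measure \<Rightarrow> ('a \<Rightarrow> 'x) \<Rightarrow> 'x set \<Rightarrow> ('a \<Rightarrow> real) \<Rightarrow> ('a \<Rightarrow> real) \<Rightarrow> real" where
  "cond_cov_on M X S A B =
     cond_exp_on M X S (\<lambda>\<omega>. A \<omega> * B \<omega>) - cond_exp_on M X S A * cond_exp_on M X S B"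

definition indistinguishable ::
  "'a measure \<Rightarrow> ('a \<Rightarrow> 'x) \<Rightarrow> ('x \<Rightarrow> real) set \<Rightarrow> ('a \<Rightarrow> real) \<Rightarrow> real \<Rightarrow> 'x set \<Rightarrow> bool" where
  "indistinguishable M X F Y \<alpha> S \<longleftrightarrow> (\<forall>f\<in>F. \<bar>cond_cov_on M X S (\<lambda>\<omega>. f (X \<omega>)) Y\<bar> \<le> \<alpha>)"

definition multicalibrated_partition ::
  "'a measure \<Rightarrow> 'x measure \<Rightarrow> ('a \<Rightarrow> 'x) \<Rightarrow> ('x \<Rightarrow> real) set \<Rightarrow> ('a \<Rightarrow> real) \<Rightarrow> real
    \<Rightarrow> nat \<Rightarrow> (nat \<Rightarrow> 'x set) \<Rightarrow> bool" where
  "multicalibrated_partition M N X F Y \<alpha> K S \<longleftrightarrow>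
     (\<forall>k<K. S k \<subseteq> space N) \<and>
     (\<forall>j<K. \<forall>k<K. j \<noteq> k \<longrightarrow> S j \<inter> S k = {}) \<and>
     (\<Union>k<K. S k) = space N \<and>
     (\<forall>k<K. indistinguishable M X F Y \<alpha> (S k))"

definition part_index :: "nat \<Rightarrow> (nat \<Rightarrow> 'x set) \<Rightarrow> 'x \<Rightarrow> nat" where
  "part_index K S x = (THE k. k < K \<and> x \<in> S k)"

end

theory Submission
  imports Defs
begin

(* Because the squared loss splits into a sum over the cells S k and every cell has its own
   pair of parameters, (\<gamma> k, \<beta> k) minimises the conditional loss on S k among all linear fits
   c + d Yh. Conditioning on X \<in> S k gives a probability space (a uniform_measure) in which the
   fit with slope d = 4 Cov(Y, Yh) and intercept E Y - d E Yh has loss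
   Var Y - 8 Cov(Y, Yh)^2 + 16 Cov(Y, Yh)^2 Var Yh \<le> Var Y - 4 Cov(Y, Yh)^2,
   because a [0,1]-valued variable has variance at most 1/4. Finally
   E (Y - f X)^2 = Var Y + Var (f X) + (E Y - E (f X))^2 - 2 Cov(f X, Y) \<ge> Var Y - 2 \<alpha>
   by \<alpha>-indistinguishability of S k. *)

definition covariance :: "'a measure \<Rightarrow> ('a \<Rightarrow> real) \<Rightarrow> ('a \<Rightarrow> real) \<Rightarrow> real" where
  "covariance M A B = (\<integral>\<omega>. A \<omega> * B \<omega> \<partial>M) - (\<integral>\<omega>. A \<omega> \<partial>M) * (\<integral>\<omega>. B \<omega> \<partial>M)"

lemma covariance_commute: "covariance M A B = covariance M B A"
  by (simp add: covariance_def mult.commute)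

definition unit_valued :: "'a measure \<Rightarrow> ('a \<Rightarrow> real) \<Rightarrow> bool" where
  "unit_valued M Z \<longleftrightarrow> Z \<in> borel_measurable M \<and> (\<forall>\<omega>\<in>space M. 0 \<le> Z \<omega> \<and> Z \<omega> \<le> 1)"

lemma unit_valued_mult:
  assumes "unit_valued M A" "unit_valued M B"
  shows "unit_valued M (\<lambda>\<omega>. A \<omega> * B \<omega>)"
  using assms by (auto simp: unit_valued_def mult_le_one)

lemma unit_valued_uniform_measure:
  "unit_valued M Z \<Longrightarrow> unit_valued (uniform_measure M A) Z"
  by (simp add: unit_valued_def measurable_cong_sets[OF sets_uniform_measure refl])

lemma (in finite_measure) integrable_bounded:
  fixes f :: "'a \<Rightarrow> real"
  assumes "f \<in> borel_measurable M" "\<And>x. x \<in> space M \<Longrightarrow> \<bar>f x\<bar> \<le> B"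
  shows "integrable M f"
  using assms by (intro integrable_const_bound[where B=B]) (auto intro: AE_I2)

lemma (in finite_measure) integrable_unit_valued:
  assumes "unit_valued M Z"
  shows "integrable M Z"
  using assms unfolding unit_valued_def by (intro integrable_bounded[where B=1]) auto

lemma (in finite_measure) integrable_indicator_linear_residual_square:
  assumes "unit_valued M Y" "unit_valued M H"
    and [measurable]: "X \<in> measurable M N" "T \<in> sets N"
  shows "integrable M (\<lambda>\<omega>. indicator T (X \<omega>) * (Y \<omega> - c - d * H \<omega>)\<^sup>2)"
proof (rule integrable_bounded)
  have [measurable]: "Y \<in> borel_measurable M" "H \<in> borel_measurable M"
    using assms(1,2) by (simp_all add: unit_valued_def)
  show "(\<lambda>\<omega>. indicator T (X \<omega>) * (Y \<omega> - c - d * H \<omega>)\<^sup>2) \<in> borel_measurable M"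
    by measurable
  fix \<omega> assume "\<omega> \<in> space M"
  then have "0 \<le> Y \<omega>" "Y \<omega> \<le> 1" "0 \<le> H \<omega>" "H \<omega> \<le> 1"
    using assms(1,2) by (auto simp: unit_valued_def)
  then have "\<bar>d * H \<omega>\<bar> \<le> \<bar>d\<bar>"
    by (simp add: abs_mult mult_left_le)
  then have "\<bar>Y \<omega> - c - d * H \<omega>\<bar> \<le> 1 + \<bar>c\<bar> + \<bar>d\<bar>"
    using \<open>0 \<le> Y \<omega>\<close> \<open>Y \<omega> \<le> 1\<close> by linarith
  then have "(Y \<omega> - c - d * H \<omega>)\<^sup>2 \<le> (1 + \<bar>c\<bar> + \<bar>d\<bar>)\<^sup>2"
    by (metis abs_ge_zero abs_power2 power2_abs power_mono)
  then show "\<bar>indicator T (X \<omega>) * (Y \<omega> - c - d * H \<omega>)\<^sup>2\<bar> \<le> (1 + \<bar>c\<bar> + \<bar>d\<bar>)\<^sup>2"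
    by (simp split: split_indicator)
qed

lemma (in prob_space) variance_le_quarter:
  assumes "unit_valued M H"
  shows "variance H \<le> 1 / 4"
proof -
  have H2: "unit_valued M (\<lambda>\<omega>. H \<omega> * H \<omega>)"
    by (intro unit_valued_mult assms)
  have "expectation (\<lambda>\<omega>. (H \<omega>)\<^sup>2) \<le> expectation H"
  proof (rule integral_mono)
    show "integrable M (\<lambda>\<omega>. (H \<omega>)\<^sup>2)" "integrable M H"
      using assms H2 by (auto simp: power2_eq_square intro: integrable_unit_valued)
    show "(H \<omega>)\<^sup>2 \<le> H \<omega>" if "\<omega> \<in> space M" for \<omega>
      using assms that by (auto simp: unit_valued_def power2_eq_square mult_left_le)
  qed
  moreover have "variance H = expectation (\<lambda>\<omega>. (H \<omega>)\<^sup>2) - (expectation H)\<^sup>2"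
    using assms H2 by (intro variance_eq integrable_unit_valued) (auto simp: power2_eq_square)
  moreover have "0 \<le> (expectation H - 1 / 2)\<^sup>2"
    by simp
  ultimately show ?thesis
    by (simp add: power2_eq_square algebra_simps)
qed

lemma (in prob_space) expectation_linear_residual_square:
  assumes Y: "unit_valued M Y" and H: "unit_valued M H"
  shows "expectation (\<lambda>\<omega>. (Y \<omega> - c - d * H \<omega>)\<^sup>2)
    = variance Y + (expectation Y - c - d * expectation H)\<^sup>2
      - 2 * d * covariance M Y H + d\<^sup>2 * variance H"
proof -
  have int: "integrable M Y" "integrable M H" "integrable M (\<lambda>\<omega>. (Y \<omega>)\<^sup>2)"
    "integrable M (\<lambda>\<omega>. (H \<omega>)\<^sup>2)" "integrable M (\<lambda>\<omega>. Y \<omega> * H \<omega>)"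
    using Y H by (auto simp: power2_eq_square intro!: integrable_unit_valued unit_valued_mult)
  have "(\<lambda>\<omega>. (Y \<omega> - c - d * H \<omega>)\<^sup>2) = (\<lambda>\<omega>. (Y \<omega>)\<^sup>2 - 2 * c * Y \<omega>
      - 2 * d * (Y \<omega> * H \<omega>) + c\<^sup>2 + 2 * c * d * H \<omega> + d\<^sup>2 * (H \<omega>)\<^sup>2)"
    by (simp add: power2_eq_square algebra_simps)
  then have expand: "expectation (\<lambda>\<omega>. (Y \<omega> - c - d * H \<omega>)\<^sup>2)
    = expectation (\<lambda>\<omega>. (Y \<omega>)\<^sup>2) - 2 * c * expectation Y - 2 * d * expectation (\<lambda>\<omega>. Y \<omega> * H \<omega>)
      + c\<^sup>2 + 2 * c * d * expectation H + d\<^sup>2 * expectation (\<lambda>\<omega>. (H \<omega>)\<^sup>2)"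
    using int by (simp add: prob_space)
  show ?thesis
    unfolding expand covariance_def variance_eq[OF int(1,3)] variance_eq[OF int(2,4)]
    by (simp add: power2_eq_square algebra_simps)
qed

lemma (in prob_space) linear_fit_covariance_gain:
  assumes "unit_valued M Y" "unit_valued M H"
  defines "d \<equiv> 4 * covariance M Y H"
  shows "expectation (\<lambda>\<omega>. (Y \<omega> - (expectation Y - d * expectation H) - d * H \<omega>)\<^sup>2)
      + 4 * (covariance M Y H)\<^sup>2 \<le> variance Y"
proof -
  have "(covariance M Y H)\<^sup>2 * variance H \<le> (covariance M Y H)\<^sup>2 * (1 / 4)"
    using variance_le_quarter[OF assms(2)] by (intro mult_left_mono) auto
  then show ?thesis
    unfolding expectation_linear_residual_square[OF assms(1,2)] d_def
    by (simp add: power2_eq_square algebra_simps)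
qed

lemma (in prob_space) variance_le_mse_plus_covariance:
  assumes "unit_valued M Y" "unit_valued M F"
  shows "variance Y \<le> expectation (\<lambda>\<omega>. (Y \<omega> - F \<omega>)\<^sup>2) + 2 * covariance M F Y"
  using expectation_linear_residual_square[OF assms, of 0 1] variance_positive[of F]
  by (simp add: covariance_commute)

lemma (in prob_space) integral_uniform_measure:
  assumes "A \<in> events" "prob A \<noteq> 0" "f \<in> borel_measurable M"
  shows "(\<integral>x. f x \<partial>uniform_measure M A) = (\<integral>x. indicator A x * f x \<partial>M) / prob A"
proof -
  have "1 / ennreal (prob A) = ennreal (1 / prob A)"
    using divide_ennreal[of 1 "prob A"] assms(2) by (simp add: zero_less_measure_iff)
  then have "uniform_measure M A = density M (\<lambda>x. ennreal (indicator A x / prob A))"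
    unfolding uniform_measure_def emeasure_eq_measure
    by (intro arg_cong[where f="density M"] ext) (simp split: split_indicator)
  then show ?thesis
    using assms by (simp add: integral_density mult.commute)
qed

lemma cond_exp_on_eq_integral_uniform_measure:
  assumes "prob_space M" "X \<in> measurable M N" "S \<in> sets N"
    and "measure M {\<omega> \<in> space M. X \<omega> \<in> S} \<noteq> 0" "Z \<in> borel_measurable M"
  shows "cond_exp_on M X S Z = (\<integral>\<omega>. Z \<omega> \<partial>uniform_measure M {\<omega> \<in> space M. X \<omega> \<in> S})"
proof -
  interpret prob_space M by fact
  have A: "{\<omega> \<in> space M. X \<omega> \<in> S} \<in> events"
    using assms(2,3) by measurable
  have "(\<integral>\<omega>. indicator S (X \<omega>) * Z \<omega> \<partial>M)
      = (\<integral>\<omega>. indicator {\<omega> \<in> space M. X \<omega> \<in> S} \<omega> * Z \<omega> \<partial>M)"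
    by (intro Bochner_Integration.integral_cong) (auto split: split_indicator)
  then show ?thesis
    using integral_uniform_measure[OF A assms(4,5)] by (simp add: cond_exp_on_def)
qed

lemma cond_cov_on_eq_covariance:
  assumes "prob_space M" "X \<in> measurable M N" "S \<in> sets N"
    and "measure M {\<omega> \<in> space M. X \<omega> \<in> S} \<noteq> 0"
    and "A \<in> borel_measurable M" "B \<in> borel_measurable M"
  shows "cond_cov_on M X S A B = covariance (uniform_measure M {\<omega> \<in> space M. X \<omega> \<in> S}) A B"
  using assms by (simp add: cond_cov_on_def covariance_def cond_exp_on_eq_integral_uniform_measure)

lemma part_index_eqI:
  assumes "disjoint_family_on S {..<K}" "k < K" "x \<in> S k"
  shows "part_index K S x = k"
  unfolding part_index_def using assms by (intro the_equality) (auto simp: disjoint_family_on_def)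

lemma integral_part_index_eq_sum:
  fixes L :: "nat \<Rightarrow> 'a \<Rightarrow> real"
  assumes disj: "disjoint_family_on S {..<K}"
    and cover: "\<And>\<omega>. \<omega> \<in> space M \<Longrightarrow> X \<omega> \<in> (\<Union>k<K. S k)"
    and int: "\<And>k. k < K \<Longrightarrow> integrable M (\<lambda>\<omega>. indicator (S k) (X \<omega>) * L k \<omega>)"
  shows "(\<integral>\<omega>. L (part_index K S (X \<omega>)) \<omega> \<partial>M) = (\<Sum>k<K. \<integral>\<omega>. indicator (S k) (X \<omega>) * L k \<omega> \<partial>M)"
proof -
  have "L (part_index K S (X \<omega>)) \<omega> = (\<Sum>k<K. indicator (S k) (X \<omega>) * L k \<omega>)"
    if \<omega>: "\<omega> \<in> space M" for \<omega>
  proof -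
    obtain j where j: "j < K" "X \<omega> \<in> S j"
      using cover[OF \<omega>] by blast
    have "(\<Sum>k<K. indicator (S k) (X \<omega>) * L k \<omega>) = (\<Sum>k<K. if k = j then L j \<omega> else 0)"
      using disj j by (intro sum.cong) (auto simp: disjoint_family_on_def split: split_indicator)
    then show ?thesis
      using j part_index_eqI[OF disj j] by simp
  qed
  then have "(\<integral>\<omega>. L (part_index K S (X \<omega>)) \<omega> \<partial>M)
      = (\<integral>\<omega>. (\<Sum>k<K. indicator (S k) (X \<omega>) * L k \<omega>) \<partial>M)"
    by (rule Bochner_Integration.integral_cong[OF refl])
  also have "\<dots> = (\<Sum>k<K. \<integral>\<omega>. indicator (S k) (X \<omega>) * L k \<omega> \<partial>M)"
    using int by (intro Bochner_Integration.integral_sum) auto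
  finally show ?thesis .
qed

lemma cell_loss_le_of_minimizer:
  fixes loss :: "'p \<Rightarrow> 'a \<Rightarrow> real"
  assumes disj: "disjoint_family_on S {..<K}"
    and cover: "\<And>\<omega>. \<omega> \<in> space M \<Longrightarrow> X \<omega> \<in> (\<Union>k<K. S k)"
    and int: "\<And>k p. k < K \<Longrightarrow> integrable M (\<lambda>\<omega>. indicator (S k) (X \<omega>) * loss p \<omega>)"
    and min: "\<And>\<theta>'. (\<integral>\<omega>. loss (\<theta> (part_index K S (X \<omega>))) \<omega> \<partial>M)
                  \<le> (\<integral>\<omega>. loss (\<theta>' (part_index K S (X \<omega>))) \<omega> \<partial>M)"
    and "k < K"
  shows "(\<integral>\<omega>. indicator (S k) (X \<omega>) * loss (\<theta> k) \<omega> \<partial>M)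
    \<le> (\<integral>\<omega>. indicator (S k) (X \<omega>) * loss p \<omega> \<partial>M)"
proof -
  define cell where "cell \<theta>' j = (\<integral>\<omega>. indicator (S j) (X \<omega>) * loss (\<theta>' j) \<omega> \<partial>M)" for \<theta>' j
  have total: "(\<integral>\<omega>. loss (\<theta>' (part_index K S (X \<omega>))) \<omega> \<partial>M) = (\<Sum>j<K. cell \<theta>' j)" for \<theta>'
    unfolding cell_def using disj cover int by (rule integral_part_index_eq_sum)
  have "(\<Sum>j<K. cell \<theta> j) \<le> (\<Sum>j<K. cell (\<theta>(k := p)) j)"
    using min[of "\<theta>(k := p)"] by (simp only: total)
  also have "\<dots> = (\<Sum>j<K. cell \<theta> j) + (cell (\<theta>(k := p)) k - cell \<theta> k)"
    using \<open>k < K\<close> by (simp add: sum.remove[of "{..<K}" k] cell_def)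
  finally have "cell \<theta> k \<le> cell (\<theta>(k := p)) k"
    by linarith
  then show ?thesis
    by (simp add: cell_def)
qed

lemma cond_exp_on_linear_fit_le_of_minimizer:
  assumes "prob_space M" "X \<in> measurable M N" "unit_valued M Y" "unit_valued M H"
    and "\<forall>k<K. S k \<in> sets N" "disjoint_family_on S {..<K}"
    and "\<And>\<omega>. \<omega> \<in> space M \<Longrightarrow> X \<omega> \<in> (\<Union>k<K. S k)"
    and min: "\<forall>g b :: nat \<Rightarrow> real.
           (\<integral>\<omega>. (Y \<omega> - \<gamma> (part_index K S (X \<omega>)) - \<beta> (part_index K S (X \<omega>)) * H \<omega>)\<^sup>2 \<partial>M)
         \<le> (\<integral>\<omega>. (Y \<omega> - g (part_index K S (X \<omega>)) - b (part_index K S (X \<omega>)) * H \<omega>)\<^sup>2 \<partial>M)"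
    and "k < K"
  shows "cond_exp_on M X (S k) (\<lambda>\<omega>. (Y \<omega> - \<gamma> k - \<beta> k * H \<omega>)\<^sup>2)
    \<le> cond_exp_on M X (S k) (\<lambda>\<omega>. (Y \<omega> - c - d * H \<omega>)\<^sup>2)"
proof -
  interpret prob_space M by fact
  define loss where "loss p \<omega> = (Y \<omega> - fst p - snd p * H \<omega>)\<^sup>2" for p :: "real \<times> real" and \<omega>
  have "(\<integral>\<omega>. indicator (S k) (X \<omega>) * loss (\<gamma> k, \<beta> k) \<omega> \<partial>M)
      \<le> (\<integral>\<omega>. indicator (S k) (X \<omega>) * loss (c, d) \<omega> \<partial>M)"
  proof (rule cell_loss_le_of_minimizer[where \<theta>="\<lambda>j. (\<gamma> j, \<beta> j)"])
    show "integrable M (\<lambda>\<omega>. indicator (S j) (X \<omega>) * loss p \<omega>)" if "j < K" for j p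
      unfolding loss_def using assms(5) that
      by (intro integrable_indicator_linear_residual_square[OF assms(3,4,2)]) auto
    show "(\<integral>\<omega>. loss (\<gamma> (part_index K S (X \<omega>)), \<beta> (part_index K S (X \<omega>))) \<omega> \<partial>M)
        \<le> (\<integral>\<omega>. loss (\<theta>' (part_index K S (X \<omega>))) \<omega> \<partial>M)" for \<theta>'
      using min[rule_format, of "\<lambda>j. fst (\<theta>' j)" "\<lambda>j. snd (\<theta>' j)"] unfolding loss_def by simp
  qed (use assms(6,7,9) in auto)
  then show ?thesis
    unfolding cond_exp_on_def loss_def by (simp add: divide_right_mono)
qed

lemma cond_linear_fit_covariance_le_cond_mse:
  assumes "prob_space M" "X \<in> measurable M N" "T \<in> sets N"
    and Y: "unit_valued M Y" and H: "unit_valued M H" and G: "unit_valued M G"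
    and min: "\<And>c d. cond_exp_on M X T (\<lambda>\<omega>. (Y \<omega> - g - b * H \<omega>)\<^sup>2)
                  \<le> cond_exp_on M X T (\<lambda>\<omega>. (Y \<omega> - c - d * H \<omega>)\<^sup>2)"
  shows "cond_exp_on M X T (\<lambda>\<omega>. (Y \<omega> - g - b * H \<omega>)\<^sup>2) + 4 * (cond_cov_on M X T Y H)\<^sup>2
    \<le> cond_exp_on M X T (\<lambda>\<omega>. (Y \<omega> - G \<omega>)\<^sup>2) + 2 * \<bar>cond_cov_on M X T G Y\<bar>"
proof -
  interpret prob_space M by fact
  define A where "A = {\<omega> \<in> space M. X \<omega> \<in> T}"
  show ?thesis
  proof (cases "prob A = 0")
    case True
    \<comment> \<open>every conditional quantity is 0 here, since division by 0 yields 0\<close>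
    then show ?thesis
      by (simp add: cond_cov_on_def cond_exp_on_def A_def)
  next
    case False
    interpret cell: prob_space "uniform_measure M A"
      using False by (intro prob_space_uniform_measure) (auto simp: emeasure_eq_measure)
    have [measurable]: "Y \<in> borel_measurable M" "H \<in> borel_measurable M" "G \<in> borel_measurable M"
      using Y H G by (simp_all add: unit_valued_def)
    have exp: "cond_exp_on M X T Z = cell.expectation Z" if "Z \<in> borel_measurable M" for Z
      using False that unfolding A_def by (intro cond_exp_on_eq_integral_uniform_measure[OF assms(1-3)])
    have cov: "cond_cov_on M X T B C = covariance (uniform_measure M A) B C"
      if "B \<in> borel_measurable M" "C \<in> borel_measurable M" for B C
      using False that unfolding A_def by (intro cond_cov_on_eq_covariance[OF assms(1-3)])
    define d where "d = 4 * covariance (uniform_measure M A) Y H"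
    have "cond_exp_on M X T (\<lambda>\<omega>. (Y \<omega> - g - b * H \<omega>)\<^sup>2) + 4 * (cond_cov_on M X T Y H)\<^sup>2
      \<le> cell.expectation (\<lambda>\<omega>. (Y \<omega> - (cell.expectation Y - d * cell.expectation H) - d * H \<omega>)\<^sup>2)
        + 4 * (covariance (uniform_measure M A) Y H)\<^sup>2"
      using min by (simp add: exp cov)
    also have "\<dots> \<le> cell.variance Y"
      unfolding d_def by (intro cell.linear_fit_covariance_gain unit_valued_uniform_measure Y H)
    also have "\<dots> \<le> cell.expectation (\<lambda>\<omega>. (Y \<omega> - G \<omega>)\<^sup>2) + 2 * covariance (uniform_measure M A) G Y"
      by (intro cell.variance_le_mse_plus_covariance unit_valued_uniform_measure Y G)
    also have "\<dots> \<le> cond_exp_on M X T (\<lambda>\<omega>. (Y \<omega> - G \<omega>)\<^sup>2) + 2 * \<bar>cond_cov_on M X T G Y\<bar>"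
      by (simp add: exp cov)
    finally show ?thesis .
  qed
qed

theorem theorem1:
  fixes M :: "'a measure" and N :: "'x measure"
    and X :: "'a \<Rightarrow> 'x" and Y Yh :: "'a \<Rightarrow> real"
    and F :: "('x \<Rightarrow> real) set" and \<alpha> :: real and K :: nat
    and S :: "nat \<Rightarrow> 'x set" and \<gamma> \<beta> :: "nat \<Rightarrow> real"
  assumes "prob_space M"
    and "X \<in> measurable M N"
    and "Y \<in> borel_measurable M" and "Yh \<in> borel_measurable M"
    and "\<forall>\<omega>\<in>space M. 0 \<le> Y \<omega> \<and> Y \<omega> \<le> 1"
    and "\<forall>\<omega>\<in>space M. 0 \<le> Yh \<omega> \<and> Yh \<omega> \<le> 1"
    and "\<forall>f\<in>F. f \<in> borel_measurable N \<and> (\<forall>x\<in>space N. 0 \<le> f x \<and> f x \<le> 1)"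
    and "\<alpha> \<ge> 0" and "K \<ge> 1"
    and "\<forall>k<K. S k \<in> sets N"
    and "multicalibrated_partition M N X F Y \<alpha> K S"
    and "\<forall>g b :: nat \<Rightarrow> real.
           (\<integral>\<omega>. (Y \<omega> - \<gamma> (part_index K S (X \<omega>)) - \<beta> (part_index K S (X \<omega>)) * Yh \<omega>)\<^sup>2 \<partial>M)
         \<le> (\<integral>\<omega>. (Y \<omega> - g (part_index K S (X \<omega>)) - b (part_index K S (X \<omega>)) * Yh \<omega>)\<^sup>2 \<partial>M)"
  shows "\<forall>f\<in>F. \<forall>k<K.
           cond_exp_on M X (S k) (\<lambda>\<omega>. (Y \<omega> - \<gamma> k - \<beta> k * Yh \<omega>)\<^sup>2)
             + 4 * (cond_cov_on M X (S k) Y Yh)\<^sup>2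
         \<le> cond_exp_on M X (S k) (\<lambda>\<omega>. (Y \<omega> - f (X \<omega>))\<^sup>2) + 2 * \<alpha>"
proof (intro ballI allI impI)
  fix f k assume f: "f \<in> F" and k: "k < K"
  note part = assms(11)[unfolded multicalibrated_partition_def]
  have disj: "disjoint_family_on S {..<K}"
    using part by (auto simp: disjoint_family_on_def)
  have cover: "X \<omega> \<in> (\<Union>k<K. S k)" if "\<omega> \<in> space M" for \<omega>
    using part measurable_space[OF assms(2) that] by blast
  have Y: "unit_valued M Y" and H: "unit_valued M Yh"
    using assms(3-6) by (auto simp: unit_valued_def)
  have F: "unit_valued M (\<lambda>\<omega>. f (X \<omega>))"
    using assms(7) f measurable_space[OF assms(2)] measurable_compose[OF assms(2), of f]
    by (auto simp: unit_valued_def)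
  have "\<bar>cond_cov_on M X (S k) (\<lambda>\<omega>. f (X \<omega>)) Y\<bar> \<le> \<alpha>"
    using part k f unfolding indistinguishable_def by blast
  moreover have "cond_exp_on M X (S k) (\<lambda>\<omega>. (Y \<omega> - \<gamma> k - \<beta> k * Yh \<omega>)\<^sup>2)
      + 4 * (cond_cov_on M X (S k) Y Yh)\<^sup>2
    \<le> cond_exp_on M X (S k) (\<lambda>\<omega>. (Y \<omega> - f (X \<omega>))\<^sup>2)
      + 2 * \<bar>cond_cov_on M X (S k) (\<lambda>\<omega>. f (X \<omega>)) Y\<bar>"
    using assms(1,2,10,12) k disj cover
    by (intro cond_linear_fit_covariance_le_cond_mse[OF _ _ _ Y H F]
        cond_exp_on_linear_fit_le_of_minimizer[OF _ _ Y H]) auto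
  ultimately show "cond_exp_on M X (S k) (\<lambda>\<omega>. (Y \<omega> - \<gamma> k - \<beta> k * Yh \<omega>)\<^sup>2)
      + 4 * (cond_cov_on M X (S k) Y Yh)\<^sup>2
    \<le> cond_exp_on M X (S k) (\<lambda>\<omega>. (Y \<omega> - f (X \<omega>))\<^sup>2) + 2 * \<alpha>"
    by linarith
qed

end
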